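(* Let $G$ be a mixed signed, directed graph. A subset $F\subseteq\mathbb{R}^n$ is a facet of $\mathrm{cone}(\mathcal{P}_G)$ if and only if there exists a facet subgraph $H$ of $G$ such that $\mathrm{cone}(\mathcal{P}_H)=F$.
   Context: A mixed signed, directed graph $G$ on vertex set $\{1,\dots,n\}$ has a set of signed edges $+ij$ or $-ij$ (loops $\pm ii$ allowed) and directed edges $(i,j)$ with $i\ne j$; between a pair of vertices any subset of $+ij,-ij,(i,j),(j,i)$ may occur. Define $\rho(\pm ij)=\pm(e_i+e_j)$ (so $\rho(\pm ii)=\pm2e_i$) and $\rho((i,j))=e_j-e_i$ in $\mathbb{R}^n$; $\mathcal{P}_G=\mathrm{conv}(\rho(E(G)))$, $\mathrm{cone}(\mathcal{P}_G)$ is the set of nonnegative real combinations of its points, and a facet is a proper face of maximal dimension. The augmented signed graph $\widetilde G$ is obtained by replacing each directed edge $(i,j)$ by a new (artificial) vertex $t_{(i,j)}$ and the two signed edges $-i\,t_{(i,j)}$ and $+t_{(i,j)}\,j$. A subgraph $H$ of $G$ has vertex set $\{1,\dots,n\}$ and a subset of the edges of $G$; $G\setminus H$ is the set of edges of $G$ not in $H$; $\widetilde H$ is the augmented graph of $H$ (with artificial vertices only for directed edges of $H$). For a signed graph, a component is a maximal connected subgraph (isolated vertices are components), and it is bipartite if its vertex set can be partitioned into $L,R$ (one possibly empty) with every edge having one endpoint in each (a component with a loop is not bipartite). Components and bipartite components of $G$ (resp. $H$) are those of $\widetilde G$ (resp. $\widetilde H$); $\mathrm{bicomp}(\cdot)$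 counts bipartite components. For a set $S$ of vertices of an augmented graph, $\pi(S)=S\cap\{1,\dots,n\}$. A subgraph $H$ of $G$ is a facet subgraph if (1) $\mathrm{bicomp}(H)=\mathrm{bicomp}(G)+1$, and (2) for any bipartite component $H'$ of $H$ which is not a component of $G$, there is a bipartition $V(\widetilde{H'})=\widetilde L\cup\widetilde R$ such that, with $L=\pi(\widetilde L)$ and $R=\pi(\widetilde R)$, every edge $e\in G\setminus H$ is of one of the forms: a positive edge with at least one endpoint in $L$ and none in $R$; a negative edge with at least one endpoint in $R$ and none in $L$; a directed edge $(i,j)$ with $j\in L$ and $i\notin L$; or a directed edge $(i,j)$ with $i\in R$ and $j\notin R$. *)

theory Defs
  imports "HOL-Analysis.Analysis"
begin

text \<open>Edges of a mixed signed, directed graph on the vertex type 'v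
  (the vertex set {1..n} is modelled by a finite type 'v, n = CARD('v)).
  A signed edge +ij / -ij is stored by its (unordered) endpoint set {i,j}
  (a singleton for a loop); a directed edge (i,j) by its ordered pair.\<close>
datatype 'v edge = Pos "'v set" | Neg "'v set" | Dir 'v 'v

definition wf_edge :: "'v edge \<Rightarrow> bool" where
  "wf_edge x = (case x of
      Pos e \<Rightarrow> (\<exists>i j. e = {i, j})
    | Neg e \<Rightarrow> (\<exists>i j. e = {i, j})
    | Dir i j \<Rightarrow> i \<noteq> j)"

definition mixed_graph :: "'v edge set \<Rightarrow> bool" where
  "mixed_graph G \<longleftrightarrow> (\<forall>x\<in>G. wf_edge x)"

definition sgn_vec :: "'v::finite set \<Rightarrow> real ^ 'v" where
  "sgn_vec e = (if \<exists>i. e = {i} then 2 else 1) *\<^sub>R (\<Sum>i\<in>e. axis i 1)"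

fun rho :: "'v::finite edge \<Rightarrow> real ^ 'v" where
  "rho (Pos e) = sgn_vec e"
| "rho (Neg e) = - sgn_vec e"
| "rho (Dir i j) = axis j 1 - axis i 1"

definition edge_polytope :: "'v::finite edge set \<Rightarrow> (real ^ 'v) set" where
  "edge_polytope G = convex hull (rho ` G)"

definition nonneg_cone :: "'a::real_vector set \<Rightarrow> 'a set" where
  "nonneg_cone P = {\<Sum>v\<in>T. c v *\<^sub>R v | T c. finite T \<and> T \<subseteq> P \<and> (\<forall>v\<in>T. 0 \<le> c v)}"

text \<open>Augmented signed graph: original vertices Inl i, artificial vertices
  Inr (i,j) = t_(i,j).  For components and bipartiteness only the underlying
  (unsigned) edges matter; an edge is represented by its endpoint set.\<close>
definition aug_vertices :: "'v edge set \<Rightarrow> ('v + 'v \<times> 'v) set" where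
  "aug_vertices G = range Inl \<union> {Inr (i, j) | i j. Dir i j \<in> G}"

definition aug_edges :: "'v edge set \<Rightarrow> ('v + 'v \<times> 'v) set set" where
  "aug_edges G =
     {Inl ` e | e. Pos e \<in> G \<or> Neg e \<in> G}
   \<union> {{Inl i, Inr (i, j)} | i j. Dir i j \<in> G}
   \<union> {{Inr (i, j), Inl j} | i j. Dir i j \<in> G}"

definition aug_adj :: "'v edge set \<Rightarrow> ('v + 'v \<times> 'v) \<Rightarrow> ('v + 'v \<times> 'v) \<Rightarrow> bool" where
  "aug_adj G x y \<longleftrightarrow> (\<exists>e\<in>aug_edges G. x \<in> e \<and> y \<in> e)"

definition comps :: "'v edge set \<Rightarrow> ('v + 'v \<times> 'v) set set" where
  "comps G = {{y \<in> aug_vertices G. (aug_adj G)\<^sup>*\<^sup>* x y} | x. x \<in> aug_vertices G}"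

definition comp_edges :: "'v edge set \<Rightarrow> ('v + 'v \<times> 'v) set \<Rightarrow> ('v + 'v \<times> 'v) set set" where
  "comp_edges G C = {e \<in> aug_edges G. e \<subseteq> C}"

definition bipartition :: "'v edge set \<Rightarrow> ('v + 'v \<times> 'v) set \<Rightarrow>
    ('v + 'v \<times> 'v) set \<Rightarrow> ('v + 'v \<times> 'v) set \<Rightarrow> bool" where
  "bipartition G C L R \<longleftrightarrow> L \<union> R = C \<and> L \<inter> R = {} \<and>
     (\<forall>e\<in>comp_edges G C. (\<exists>a b. a \<in> L \<and> b \<in> R \<and> e = {a, b}))"

definition bipartite_comp :: "'v edge set \<Rightarrow> ('v + 'v \<times> 'v) set \<Rightarrow> bool" where
  "bipartite_comp G C \<longleftrightarrow> (\<exists>L R. bipartition G C L R)"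

definition bicomp :: "'v edge set \<Rightarrow> nat" where
  "bicomp G = card {C \<in> comps G. bipartite_comp G C}"

text \<open>A component (C, edges of H~ in C) of H is a component of G iff it coincides
  as a subgraph (same vertex set and same edge set) with a component of G~.\<close>
definition is_comp_of :: "'v edge set \<Rightarrow> 'v edge set \<Rightarrow> ('v + 'v \<times> 'v) set \<Rightarrow> bool" where
  "is_comp_of G H C \<longleftrightarrow> C \<in> comps G \<and> comp_edges G C = comp_edges H C"

definition proj :: "('v + 'v \<times> 'v) set \<Rightarrow> 'v set" where
  "proj S = {i. Inl i \<in> S}"

definition edge_ok :: "'v set \<Rightarrow> 'v set \<Rightarrow> 'v edge \<Rightarrow> bool" where
  "edge_ok L R x = (case x of
      Pos e \<Rightarrow> e \<inter> L \<noteq> {} \<and> e \<inter> R = {}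
    | Neg e \<Rightarrow> e \<inter> R \<noteq> {} \<and> e \<inter> L = {}
    | Dir i j \<Rightarrow> (j \<in> L \<and> i \<notin> L) \<or> (i \<in> R \<and> j \<notin> R))"

definition facet_subgraph :: "'v edge set \<Rightarrow> 'v edge set \<Rightarrow> bool" where
  "facet_subgraph G H \<longleftrightarrow> H \<subseteq> G \<and>
     bicomp H = bicomp G + 1 \<and>
     (\<forall>C \<in> comps H. bipartite_comp H C \<and> \<not> is_comp_of G H C \<longrightarrow>
        (\<exists>L R. bipartition H C L R \<and>
           (\<forall>x \<in> G - H. edge_ok (proj L) (proj R) x)))"

end

theory Submission
  imports Defs
begin

text \<open>
  A facet of the finitely generated cone spanned by the vectors \<open>rho e\<close>, \<open>e \<in> G\<close>, is cut out by a
  supporting hyperplane \<open>a \<bullet> x = 0\<close> with \<open>a \<bullet> rho e \<ge> 0\<close> on \<open>G\<close>, so it is the cone of the subgraph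
  \<open>H\<close> of edges with \<open>a \<bullet> rho e = 0\<close>; conversely every such \<open>H\<close> gives a face, and it is a facet iff
  \<open>dim (rho ` H) = dim (rho ` G) - 1\<close>.
  The orthogonal complement of \<open>rho ` H\<close> consists of the vectors whose extension to the augmented
  graph alternates in sign along every edge; such a labelling is a multiple of the \<open>\<pm>1\<close> labelling of
  a bipartition on each bipartite component and vanishes on the others.  Hence
  \<open>dim (rho ` H) + bicomp H = n\<close>, which turns the dimension condition into
  \<open>bicomp H = bicomp G + 1\<close>.  The normal \<open>a\<close> of a facet then differs from the \<open>\<pm>1\<close> labelling of every
  new bipartite component of \<open>H\<close> by an element of the complement of \<open>rho ` G\<close>, up to a nonzero factor
  whose sign orients the bipartition; the conditions on the edges of \<open>G - H\<close> say exactly that this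
  labelling is positive on them.
\<close>

section \<open>Finitely generated convex cones\<close>

lemma sum_mem_convex_cone_hull:
  assumes "finite T" "\<And>v. v \<in> T \<Longrightarrow> v \<in> convex_cone hull X" "\<And>v. v \<in> T \<Longrightarrow> 0 \<le> c v"
  shows "(\<Sum>v\<in>T. c v *\<^sub>R v) \<in> convex_cone hull X"
  using assms
proof (induction T rule: finite_induct)
  case empty
  then show ?case by (simp add: convex_cone_hull_contains_0)
next
  case (insert x F)
  then show ?case by (simp add: convex_cone_hull_add convex_cone_hull_mul)
qed

lemma convex_cone_hull_finite:
  assumes "finite X"
  shows "convex_cone hull X = {\<Sum>v\<in>X. c v *\<^sub>R v | c. \<forall>v\<in>X. 0 \<le> c v}" (is "_ = ?S")
proof
  show "convex_cone hull X \<subseteq> ?S"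
  proof (rule hull_minimal)
    show "X \<subseteq> ?S"
    proof
      fix x assume "x \<in> X"
      have "(\<Sum>v\<in>X. (if v = x then 1 else 0) *\<^sub>R v) = (\<Sum>v\<in>X. if v = x then v else 0)"
        by (rule sum.cong) auto
      then have "x = (\<Sum>v\<in>X. (if v = x then 1 else 0) *\<^sub>R v)"
        using assms \<open>x \<in> X\<close> by simp
      then show "x \<in> ?S" by force
    qed
    show "convex_cone ?S"
      unfolding convex_cone_iff
    proof (intro conjI ballI allI impI)
      show "0 \<in> ?S"
        by (intro CollectI exI[of _ "\<lambda>_. 0"]) simp
    next
      fix x y assume "x \<in> ?S" "y \<in> ?S"
      then obtain c d where "x = (\<Sum>v\<in>X. c v *\<^sub>R v)" "\<forall>v\<in>X. 0 \<le> c v"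
        and "y = (\<Sum>v\<in>X. d v *\<^sub>R v)" "\<forall>v\<in>X. 0 \<le> d v" by auto
      then show "x + y \<in> ?S"
        by (intro CollectI exI[of _ "\<lambda>v. c v + d v"]) (simp add: scaleR_add_left sum.distrib)
    next
      fix x :: 'a and r :: real assume "x \<in> ?S" "0 \<le> r"
      then obtain c where "x = (\<Sum>v\<in>X. c v *\<^sub>R v)" "\<forall>v\<in>X. 0 \<le> c v" by auto
      with \<open>0 \<le> r\<close> show "r *\<^sub>R x \<in> ?S"
        by (intro CollectI exI[of _ "\<lambda>v. r * c v"]) (simp add: scaleR_sum_right)
    qed
  qed
  show "?S \<subseteq> convex_cone hull X"
    using assms by (auto intro: sum_mem_convex_cone_hull hull_inc)
qed

lemma nonneg_cone_convex_hull:
  assumes "finite X"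
  shows "nonneg_cone (convex hull X) = convex_cone hull X"
proof
  show "nonneg_cone (convex hull X) \<subseteq> convex_cone hull X"
    unfolding nonneg_cone_def
    using convex_hull_subset_convex_cone_hull by (auto intro!: sum_mem_convex_cone_hull)
  show "convex_cone hull X \<subseteq> nonneg_cone (convex hull X)"
    unfolding convex_cone_hull_finite[OF assms] nonneg_cone_def
    using assms hull_subset[of X convex] by blast
qed

lemma aff_dim_convex_cone_hull:
  fixes X :: "'a::euclidean_space set"
  shows "aff_dim (convex_cone hull X) = int (dim X)"
proof -
  have "span (convex_cone hull X) = span X"
  proof
    show "span (convex_cone hull X) \<subseteq> span X"
      by (metis convex_cone_span hull_minimal span_minimal span_superset subspace_span)
    show "span X \<subseteq> span (convex_cone hull X)"
      by (simp add: hull_subset span_mono)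
  qed
  then have "dim (convex_cone hull X) = dim X"
    by (metis dim_span)
  then show ?thesis
    by (simp add: aff_dim_zero convex_cone_hull_contains_0 hull_inc)
qed

lemma convex_cone_hull_Int_supporting_hyperplane:
  fixes X :: "'a::euclidean_space set"
  assumes fin: "finite X" and nonneg: "\<forall>v\<in>X. 0 \<le> a \<bullet> v"
  shows "convex_cone hull X \<inter> {x. a \<bullet> x = 0} = convex_cone hull {v\<in>X. a \<bullet> v = 0}"
proof
  show "convex_cone hull X \<inter> {x. a \<bullet> x = 0} \<subseteq> convex_cone hull {v\<in>X. a \<bullet> v = 0}"
  proof
    fix x assume x: "x \<in> convex_cone hull X \<inter> {x. a \<bullet> x = 0}"
    then obtain c where c: "x = (\<Sum>v\<in>X. c v *\<^sub>R v)" "\<forall>v\<in>X. 0 \<le> c v"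
      unfolding convex_cone_hull_finite[OF fin] by blast
    have "(\<Sum>v\<in>X. c v * (a \<bullet> v)) = 0"
      using x c by (simp add: inner_sum_right)
    moreover have "\<forall>v\<in>X. 0 \<le> c v * (a \<bullet> v)"
      using c nonneg by auto
    ultimately have "\<forall>v\<in>X. c v * (a \<bullet> v) = 0"
      using sum_nonneg_eq_0_iff[OF fin, of "\<lambda>v. c v * (a \<bullet> v)"] by simp
    then have "x = (\<Sum>v\<in>{v\<in>X. a \<bullet> v = 0}. c v *\<^sub>R v)"
      unfolding c(1) using fin by (intro sum.mono_neutral_right) auto
    then show "x \<in> convex_cone hull {v\<in>X. a \<bullet> v = 0}"
      using c(2) fin by (auto intro: sum_mem_convex_cone_hull hull_inc)
  qed
  have "convex_cone hull {v\<in>X. a \<bullet> v = 0} \<subseteq> {x. a \<bullet> x = 0}"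
    by (rule hull_minimal) (auto intro: subspace_imp_convex_cone subspace_hyperplane)
  moreover have "convex_cone hull {v\<in>X. a \<bullet> v = 0} \<subseteq> convex_cone hull X"
    by (rule hull_mono) auto
  ultimately show "convex_cone hull {v\<in>X. a \<bullet> v = 0} \<subseteq> convex_cone hull X \<inter> {x. a \<bullet> x = 0}"
    by blast
qed

lemma face_of_convex_cone_hull_finite:
  fixes X :: "'a::euclidean_space set"
  assumes fin: "finite X" and face: "F face_of convex_cone hull X" and "F \<noteq> {}"
  obtains a where "\<forall>v\<in>X. 0 \<le> a \<bullet> v" "F = convex_cone hull {v\<in>X. a \<bullet> v = 0}"
proof -
  let ?C = "convex_cone hull X"
  have "F exposed_face_of ?C"
    using exposed_face_of_polyhedron[OF polyhedron_convex_cone_hull[OF fin]] face by blast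
  then obtain a b where le: "?C \<subseteq> {x. a \<bullet> x \<le> b}" and F: "F = ?C \<inter> {x. a \<bullet> x = b}"
    by (auto simp: exposed_face_of_def)
  obtain y where "y \<in> F" using \<open>F \<noteq> {}\<close> by blast
  \<comment> \<open>Both \<open>0\<close> and \<open>2 y\<close> lie in the cone, so the supporting hyperplane passes through the apex.\<close>
  have "0 \<le> b"
    using le convex_cone_hull_contains_0 by fastforce
  moreover have "a \<bullet> (2 *\<^sub>R y) \<le> b"
    using le F \<open>y \<in> F\<close> convex_cone_hull_mul[of y X 2] by auto
  ultimately have "b = 0"
    using F \<open>y \<in> F\<close> by simp
  have "\<forall>v\<in>X. 0 \<le> - a \<bullet> v"
    using le \<open>b = 0\<close> by (auto dest!: hull_inc[of _ X convex_cone])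
  moreover have "F = convex_cone hull {v\<in>X. - a \<bullet> v = 0}"
    using F \<open>b = 0\<close> convex_cone_hull_Int_supporting_hyperplane[OF fin calculation] by simp
  ultimately show ?thesis using that by blast
qed

lemma convex_cone_hull_supporting_facet_of:
  fixes X :: "'a::euclidean_space set"
  assumes fin: "finite X" and nonneg: "\<forall>v\<in>X. 0 \<le> a \<bullet> v"
    and dim: "dim {v\<in>X. a \<bullet> v = 0} + 1 = dim X"
  shows "convex_cone hull {v\<in>X. a \<bullet> v = 0} facet_of convex_cone hull X"
proof -
  let ?F = "convex_cone hull {v\<in>X. a \<bullet> v = 0}"
  have "convex_cone hull X \<subseteq> {x. 0 \<le> a \<bullet> x}"
    using nonneg by (intro hull_minimal) (auto simp: convex_cone_iff inner_add_right)
  then have "convex_cone hull X \<inter> {x. a \<bullet> x = 0} face_of convex_cone hull X"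
    by (intro face_of_Int_supporting_hyperplane_ge convex_convex_cone_hull) blast
  then have "?F face_of convex_cone hull X"
    using convex_cone_hull_Int_supporting_hyperplane[OF fin nonneg] by simp
  moreover have "?F \<noteq> {}"
    using convex_cone_hull_contains_0 by blast
  moreover have "aff_dim ?F = aff_dim (convex_cone hull X) - 1"
    using dim by (simp add: aff_dim_convex_cone_hull)
  ultimately show ?thesis
    by (simp add: facet_of_def)
qed

lemma facet_of_convex_cone_hull_finite_iff:
  fixes X :: "'a::euclidean_space set"
  assumes fin: "finite X"
  shows "F facet_of convex_cone hull X \<longleftrightarrow>
    (\<exists>a. (\<forall>v\<in>X. 0 \<le> a \<bullet> v) \<and> dim {v\<in>X. a \<bullet> v = 0} + 1 = dim X \<and>
         F = convex_cone hull {v\<in>X. a \<bullet> v = 0})"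
proof
  assume "F facet_of convex_cone hull X"
  then have face: "F face_of convex_cone hull X" "F \<noteq> {}"
    and dim: "aff_dim F = aff_dim (convex_cone hull X) - 1"
    by (auto simp: facet_of_def)
  obtain a where "\<forall>v\<in>X. 0 \<le> a \<bullet> v" "F = convex_cone hull {v\<in>X. a \<bullet> v = 0}"
    using face_of_convex_cone_hull_finite[OF fin face] .
  moreover from this have "dim {v\<in>X. a \<bullet> v = 0} + 1 = dim X"
    using dim by (simp add: aff_dim_convex_cone_hull)
  ultimately show "\<exists>a. (\<forall>v\<in>X. 0 \<le> a \<bullet> v) \<and> dim {v\<in>X. a \<bullet> v = 0} + 1 = dim X \<and>
      F = convex_cone hull {v\<in>X. a \<bullet> v = 0}"
    by blast
qed (use convex_cone_hull_supporting_facet_of[OF fin] in blast)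

section \<open>The vectors \<open>rho e\<close>\<close>

lemma finite_edge_set: "finite (G :: ('v::finite) edge set)"
proof -
  have "G \<subseteq> range Pos \<union> range Neg \<union> case_prod Dir ` UNIV"
    by (auto, case_tac x, auto)
  then show ?thesis
    by (rule finite_subset) simp
qed

lemma nonneg_cone_edge_polytope:
  "nonneg_cone (edge_polytope (H :: ('v::finite) edge set)) = convex_cone hull (rho ` H)"
  unfolding edge_polytope_def by (simp add: nonneg_cone_convex_hull finite_edge_set)

lemma mixed_graph_subset: "mixed_graph G \<Longrightarrow> H \<subseteq> G \<Longrightarrow> mixed_graph H"
  by (auto simp: mixed_graph_def)

lemma mixed_graph_wf_edge: "mixed_graph G \<Longrightarrow> e \<in> G \<Longrightarrow> wf_edge e"
  by (simp add: mixed_graph_def)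

lemma mixed_graph_signed_edge:
  assumes "mixed_graph G" "Pos s \<in> G \<or> Neg s \<in> G"
  obtains i j where "s = {i, j}"
proof -
  have "wf_edge (Pos s) \<or> wf_edge (Neg s)"
    using assms mixed_graph_wf_edge by blast
  then show ?thesis
    using that by (auto simp: wf_edge_def)
qed

lemma inner_rho_Pos: "a \<bullet> rho (Pos {i, j}) = (if i = j then 2 * a$i else a$i + a$j)"
  by (auto simp: sgn_vec_def inner_axis inner_sum_right doubleton_eq_iff)

lemma inner_rho_Neg: "a \<bullet> rho (Neg {i, j}) = (if i = j then - 2 * a$i else - (a$i + a$j))"
  by (auto simp: sgn_vec_def inner_axis inner_sum_right doubleton_eq_iff)

lemma inner_rho_Dir: "a \<bullet> rho (Dir i j) = a$j - a$i"
  by (simp add: inner_axis inner_diff_right)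

lemma inner_rho_Pos_loop: "a \<bullet> rho (Pos {i}) = 2 * a$i"
  using inner_rho_Pos[of a i i] by simp

lemma inner_rho_Neg_loop: "a \<bullet> rho (Neg {i}) = - 2 * a$i"
  using inner_rho_Neg[of a i i] by simp

lemmas inner_rho = inner_rho_Pos inner_rho_Neg inner_rho_Dir inner_rho_Pos_loop inner_rho_Neg_loop

declare rho.simps [simp del]

fun edge_verts :: "'v edge \<Rightarrow> 'v set" where
  "edge_verts (Pos s) = s"
| "edge_verts (Neg s) = s"
| "edge_verts (Dir i j) = {i, j}"

lemma inner_rho_eq_scaled:
  assumes "wf_edge e" "\<forall>i\<in>edge_verts e. w$i = c * b$i"
  shows "w \<bullet> rho e = c * (b \<bullet> rho e)"
  using assms by (cases e) (auto simp: wf_edge_def inner_rho algebra_simps)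

lemma inner_rho_zero_support:
  assumes "wf_edge e" "b \<bullet> rho e = 0" "i \<in> edge_verts e" "j \<in> edge_verts e" "b$i \<noteq> 0"
  shows "b$j \<noteq> 0"
  using assms by (cases e) (auto simp: wf_edge_def inner_rho split: if_splits)

section \<open>Components of the augmented graph\<close>

type_synonym 'v avert = "'v + 'v \<times> 'v"

definition aug_comp :: "'v edge set \<Rightarrow> 'v avert \<Rightarrow> 'v avert set" where
  "aug_comp H x = {y \<in> aug_vertices H. (aug_adj H)\<^sup>*\<^sup>* x y}"

lemma comps_eq_image_aug_comp: "comps H = aug_comp H ` aug_vertices H"
  by (auto simp: comps_def aug_comp_def)

lemma aug_edges_subset_vertices: "e \<in> aug_edges H \<Longrightarrow> e \<subseteq> aug_vertices H"
  by (auto simp: aug_edges_def aug_vertices_def)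

lemma aug_adj_sym: "aug_adj H x y \<Longrightarrow> aug_adj H y x"
  by (auto simp: aug_adj_def)

lemma aug_adj_vertex: "aug_adj H x y \<Longrightarrow> y \<in> aug_vertices H"
  using aug_edges_subset_vertices by (fastforce simp: aug_adj_def)

lemma aug_adj_rtrancl_sym: "(aug_adj H)\<^sup>*\<^sup>* x y \<Longrightarrow> (aug_adj H)\<^sup>*\<^sup>* y x"
  by (induction rule: rtranclp_induct) (auto intro: converse_rtranclp_into_rtranclp aug_adj_sym)

lemma comps_eq_aug_comp:
  assumes "K \<in> comps H" "y \<in> K"
  shows "K = aug_comp H y"
proof -
  obtain x where x: "x \<in> aug_vertices H" "K = aug_comp H x"
    using assms(1) by (auto simp: comps_eq_image_aug_comp)
  then have xy: "(aug_adj H)\<^sup>*\<^sup>* x y"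
    using assms(2) by (auto simp: aug_comp_def)
  show ?thesis
    using x xy aug_adj_rtrancl_sym[OF xy] by (auto simp: aug_comp_def intro: rtranclp_trans)
qed

lemma comps_disjoint: "A \<in> comps H \<Longrightarrow> B \<in> comps H \<Longrightarrow> x \<in> A \<Longrightarrow> x \<in> B \<Longrightarrow> A = B"
  using comps_eq_aug_comp by metis

lemma comps_subset_vertices: "K \<in> comps H \<Longrightarrow> K \<subseteq> aug_vertices H"
  by (auto simp: comps_eq_image_aug_comp aug_comp_def)

lemma comps_adj_closed:
  assumes "K \<in> comps H" "y \<in> K" "aug_adj H y z"
  shows "z \<in> K"
proof -
  have "K = aug_comp H y"
    using comps_eq_aug_comp assms(1,2) .
  then show ?thesis
    using assms(3) aug_adj_vertex by (auto simp: aug_comp_def)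
qed

lemma comps_connected:
  assumes "K \<in> comps H" "x \<in> K" "y \<in> K"
  shows "(aug_adj H)\<^sup>*\<^sup>* x y"
  using comps_eq_aug_comp[OF assms(1,2)] assms(3) by (auto simp: aug_comp_def)

lemma comps_edge_subset: "K \<in> comps H \<Longrightarrow> e \<in> aug_edges H \<Longrightarrow> x \<in> e \<Longrightarrow> x \<in> K \<Longrightarrow> e \<subseteq> K"
  using comps_adj_closed by (fastforce simp: aug_adj_def)

lemma aug_edgesI:
  "Pos s \<in> H \<Longrightarrow> Inl ` s \<in> aug_edges H"
  "Neg s \<in> H \<Longrightarrow> Inl ` s \<in> aug_edges H"
  "Dir i j \<in> H \<Longrightarrow> {Inl i, Inr (i, j)} \<in> aug_edges H"
  "Dir i j \<in> H \<Longrightarrow> {Inr (i, j), Inl j} \<in> aug_edges H"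
  by (auto simp: aug_edges_def)

lemma aug_edgesE:
  assumes "e \<in> aug_edges H"
  obtains (signed) s where "e = Inl ` s" "Pos s \<in> H \<or> Neg s \<in> H"
    | (tail) i j where "e = {Inl i, Inr (i, j)}" "Dir i j \<in> H"
    | (head) i j where "e = {Inr (i, j), Inl j}" "Dir i j \<in> H"
  using assms unfolding aug_edges_def by (elim UnE CollectE exE conjE) auto

lemma Inl_aug_vertices: "Inl i \<in> aug_vertices H"
  by (simp add: aug_vertices_def)

lemma Dir_if_Inr_aug_vertices: "Inr (i, j) \<in> aug_vertices H \<Longrightarrow> Dir i j \<in> H"
  by (auto simp: aug_vertices_def)

lemma aug_adj_Inr_Inl:
  assumes "Dir i j \<in> H"
  shows "aug_adj H (Inr (i, j)) (Inl i)"
proof -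
  have "{Inl i, Inr (i, j)} \<in> aug_edges H"
    using assms by (rule aug_edgesI(3))
  then show ?thesis
    unfolding aug_adj_def by blast
qed

lemma aug_comp_Inl: "aug_comp H (Inl i) \<in> comps H" "Inl i \<in> aug_comp H (Inl i)"
  unfolding comps_eq_image_aug_comp
  by (rule imageI[OF Inl_aug_vertices]) (simp add: aug_comp_def Inl_aug_vertices)

lemma comps_ex_Inl:
  assumes K: "K \<in> comps H"
  obtains i where "Inl i \<in> K"
proof -
  obtain x where x: "x \<in> aug_vertices H" "K = aug_comp H x"
    using K by (auto simp: comps_eq_image_aug_comp)
  then have "x \<in> K"
    by (simp add: aug_comp_def)
  show ?thesis
  proof (cases x)
    case (Inl i)
    then show ?thesis using \<open>x \<in> K\<close> that by blast
  next
    case (Inr p)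
    then obtain i j where p: "x = Inr (i, j)"
      by (metis surj_pair)
    have "Dir i j \<in> H"
      using x(1) unfolding p by (rule Dir_if_Inr_aug_vertices)
    then have "aug_adj H x (Inl i)"
      unfolding p by (rule aug_adj_Inr_Inl)
    then show ?thesis using comps_adj_closed[OF K \<open>x \<in> K\<close>] that by blast
  qed
qed

lemma finite_comps: "finite (comps (H :: ('v::finite) edge set))"
proof -
  have "aug_vertices H \<subseteq> range Inl \<union> range Inr"
    by (auto simp: aug_vertices_def)
  then have "finite (aug_vertices H)"
    by (rule finite_subset) simp
  then show ?thesis
    by (simp add: comps_eq_image_aug_comp)
qed

lemma aug_edge_doubleton:
  assumes "mixed_graph H" "e \<in> aug_edges H"
  obtains p q where "e = {p, q}"
  using assms(2)
proof (cases rule: aug_edgesE)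
  case (signed s)
  then obtain i j where "s = {i, j}"
    using mixed_graph_signed_edge[OF assms(1)] by blast
  then show ?thesis using signed that by auto
qed (use that in auto)

section \<open>The orthogonal complement of \<open>rho ` H\<close>\<close>

definition ann :: "('v::finite) edge set \<Rightarrow> (real ^ 'v) set" where
  "ann H = {a. \<forall>e\<in>H. a \<bullet> rho e = 0}"

lemma subspace_ann: "subspace (ann H)"
  by (auto simp: subspace_def ann_def inner_add_left)

lemma ann_antimono: "H \<subseteq> G \<Longrightarrow> ann G \<subseteq> ann H"
  by (auto simp: ann_def)

definition alternating :: "'v edge set \<Rightarrow> ('v avert \<Rightarrow> real) \<Rightarrow> bool" where
  "alternating H f \<longleftrightarrow> (\<forall>e\<in>aug_edges H. \<forall>x y. e = {x, y} \<longrightarrow> f x + f y = 0)"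

text \<open>The artificial vertex \<open>t_(i,j)\<close> receives \<open>- a$i\<close>, which makes the labelling alternate on the
  two edges replacing \<open>(i,j)\<close> exactly when \<open>a$j = a$i\<close>.\<close>
definition aug_labelling :: "real ^ 'v \<Rightarrow> 'v avert \<Rightarrow> real" where
  "aug_labelling a x = (case x of Inl i \<Rightarrow> a$i | Inr (i, j) \<Rightarrow> - a$i)"

definition side_sign :: "'v avert set \<Rightarrow> 'v avert set \<Rightarrow> 'v avert \<Rightarrow> real" where
  "side_sign L R x = (if x \<in> L then 1 else if x \<in> R then -1 else 0)"

definition bip_vec :: "'v avert set \<Rightarrow> 'v avert set \<Rightarrow> real ^ ('v::finite)" where
  "bip_vec L R = (\<chi> i. side_sign L R (Inl i))"

lemma bip_vec_nth: "bip_vec L R $ i = side_sign L R (Inl i)"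
  by (simp add: bip_vec_def)

lemma bip_vec_nonzero_iff: "bip_vec L R $ i \<noteq> 0 \<longleftrightarrow> Inl i \<in> L \<union> R"
  by (simp add: bip_vec_nth side_sign_def)

lemma alternatingD: "alternating H f \<Longrightarrow> {x, y} \<in> aug_edges H \<Longrightarrow> f x + f y = 0"
  by (auto simp: alternating_def)

lemma alternating_imp_ann:
  assumes "mixed_graph H" "alternating H f"
  shows "(\<chi> i. f (Inl i)) \<in> ann H"
  unfolding ann_def
proof (intro CollectI ballI)
  fix e assume e: "e \<in> H"
  then have "wf_edge e"
    using assms(1) by (rule mixed_graph_wf_edge[rotated])
  show "(\<chi> i. f (Inl i)) \<bullet> rho e = 0"
  proof (cases e)
    case (Pos s)
    then obtain i j where s: "s = {i, j}"
      using \<open>wf_edge e\<close> by (auto simp: wf_edge_def)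
    have "f (Inl i) + f (Inl j) = 0"
      using alternatingD[OF assms(2)] aug_edgesI(1)[of s H] e Pos s by auto
    then show ?thesis using Pos s by (cases "i = j") (simp_all add: inner_rho)
  next
    case (Neg s)
    then obtain i j where s: "s = {i, j}"
      using \<open>wf_edge e\<close> by (auto simp: wf_edge_def)
    have "f (Inl i) + f (Inl j) = 0"
      using alternatingD[OF assms(2)] aug_edgesI(2)[of s H] e Neg s by auto
    then show ?thesis using Neg s by (cases "i = j") (simp_all add: inner_rho)
  next
    case (Dir i j)
    have "f (Inl i) + f (Inr (i, j)) = 0" "f (Inr (i, j)) + f (Inl j) = 0"
      using alternatingD[OF assms(2) aug_edgesI(3)] alternatingD[OF assms(2) aug_edgesI(4)] e Dir
      by auto
    then show ?thesis using Dir by (simp add: inner_rho)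
  qed
qed

lemma ann_imp_alternating:
  assumes "mixed_graph H" "a \<in> ann H"
  shows "alternating H (aug_labelling a)"
  unfolding alternating_def
proof (intro ballI allI impI)
  fix e x y assume e: "e \<in> aug_edges H" and exy: "e = {x, y}"
  have ann: "\<And>e. e \<in> H \<Longrightarrow> a \<bullet> rho e = 0"
    using assms(2) by (auto simp: ann_def)
  from e show "aug_labelling a x + aug_labelling a y = 0"
  proof (cases rule: aug_edgesE)
    case (signed s)
    then obtain i j where s: "s = {i, j}"
      using mixed_graph_signed_edge[OF assms(1)] by blast
    have "a \<bullet> rho (Pos s) = 0 \<or> a \<bullet> rho (Neg s) = 0"
      using signed ann by blast
    then have "(if i = j then 2 * a$i else a$i + a$j) = 0"
      using s by (auto simp: inner_rho_Pos inner_rho_Neg split: if_splits)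
    moreover have "{Inl i, Inl j} = {x, y}"
      using signed s exy by simp
    ultimately show ?thesis
      by (auto simp: doubleton_eq_iff aug_labelling_def split: if_splits)
  next
    case (tail i j)
    then show ?thesis using exy by (auto simp: doubleton_eq_iff aug_labelling_def)
  next
    case (head i j)
    then have "a$j - a$i = 0"
      using ann inner_rho_Dir by metis
    then show ?thesis using head exy by (auto simp: doubleton_eq_iff aug_labelling_def)
  qed
qed

lemma bipartition_disjoint: "bipartition H K L R \<Longrightarrow> L \<inter> R = {}"
  and bipartition_Un: "bipartition H K L R \<Longrightarrow> L \<union> R = K"
  by (simp_all add: bipartition_def)

lemma bipartition_edge:
  assumes "K \<in> comps H" "bipartition H K L R" "e \<in> aug_edges H" "x \<in> e" "x \<in> K"
  obtains p q where "p \<in> L" "q \<in> R" "e = {p, q}"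
  using assms comps_edge_subset[OF assms(1,3,4,5)] by (auto simp: bipartition_def comp_edges_def)

lemma bipartition_swap: "bipartition H K L R \<Longrightarrow> bipartition H K R L"
  unfolding bipartition_def by (metis Int_commute Un_commute insert_commute)

lemma bip_vec_swap: "L \<inter> R = {} \<Longrightarrow> bip_vec R L = - bip_vec L R"
  by (auto simp: vec_eq_iff bip_vec_nth side_sign_def)

lemma bipartition_alternating:
  assumes K: "K \<in> comps H" and bp: "bipartition H K L R"
  shows "alternating H (side_sign L R)"
  unfolding alternating_def
proof (intro ballI allI impI)
  fix e x y assume e: "e \<in> aug_edges H" and exy: "e = {x, y}"
  note LR = bipartition_disjoint[OF bp] bipartition_Un[OF bp]
  show "side_sign L R x + side_sign L R y = 0"
  proof (cases "x \<in> K")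
    case True
    then obtain p q where "p \<in> L" "q \<in> R" "e = {p, q}"
      using bipartition_edge[OF K bp e] exy by blast
    then show ?thesis using LR exy by (auto simp: side_sign_def doubleton_eq_iff)
  next
    case False
    then have "y \<notin> K"
      using comps_edge_subset[OF K e, of y] exy by auto
    then show ?thesis using False LR by (auto simp: side_sign_def)
  qed
qed

lemma bip_vec_ann:
  assumes "mixed_graph H" "K \<in> comps H" "bipartition H K L R"
  shows "bip_vec L R \<in> ann H"
  using alternating_imp_ann[OF assms(1) bipartition_alternating[OF assms(2,3)]]
  by (simp add: bip_vec_def)

text \<open>Along a path an alternating labelling and the \<open>\<pm>1\<close> labelling of a bipartition both flip sign
  at every step, so their product is constant on the component.\<close>
lemma alternating_times_side_sign_const:
  assumes f: "alternating H f" and K: "K \<in> comps H" and bp: "bipartition H K L R"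
    and x: "x \<in> K" and y: "y \<in> K"
  shows "f y * side_sign L R y = f x * side_sign L R x"
proof -
  note LR = bipartition_disjoint[OF bp]
  have "y \<in> K \<and> f y * side_sign L R y = f x * side_sign L R x"
    using comps_connected[OF K x y]
  proof (induction rule: rtranclp_induct)
    case base
    then show ?case using x by simp
  next
    case (step z w)
    then have "z \<in> K" "w \<in> K"
      using comps_adj_closed[OF K] by blast+
    obtain e where e: "e \<in> aug_edges H" "z \<in> e" "w \<in> e"
      using step.hyps(2) by (auto simp: aug_adj_def)
    then obtain p q where pq: "p \<in> L" "q \<in> R" "e = {p, q}"
      using bipartition_edge[OF K bp e(1,2) \<open>z \<in> K\<close>] by blast
    have "f w * side_sign L R w = f z * side_sign L R z"
    proof (cases "z = w")
      case False
      then have zw: "(z = p \<and> w = q) \<or> (z = q \<and> w = p)"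
        using pq e by auto
      then have "f z + f w = 0"
        using alternatingD[OF f] e(1) pq by (auto simp: insert_commute)
      then show ?thesis
        using zw pq LR by (auto simp: side_sign_def)
    qed simp
    then show ?case
      using step.IH \<open>w \<in> K\<close> by simp
  qed
  then show ?thesis ..
qed

lemma ann_on_bipartite_comp:
  assumes "mixed_graph H" "a \<in> ann H" and K: "K \<in> comps H" and bp: "bipartition H K L R"
  obtains c where "\<And>i. Inl i \<in> K \<Longrightarrow> a$i = c * bip_vec L R $ i"
proof -
  obtain i0 where i0: "Inl i0 \<in> K"
    using comps_ex_Inl[OF K] .
  have f: "alternating H (aug_labelling a)"
    using ann_imp_alternating assms by blast
  note LR = bipartition_disjoint[OF bp] bipartition_Un[OF bp]
  have "a$i = (a$i0 * side_sign L R (Inl i0)) * bip_vec L R $ i" if "Inl i \<in> K" for i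
    using alternating_times_side_sign_const[OF f K bp i0 that] that i0 LR
    by (auto simp: side_sign_def bip_vec_nth aug_labelling_def)
  then show ?thesis using that by blast
qed

lemma alternating_comp_eq_or_neg:
  assumes H: "mixed_graph H" and f: "alternating H f" and K: "K \<in> comps H"
    and y: "y \<in> K" and z: "z \<in> K"
  shows "f z = f y \<or> f z = - f y"
  using comps_connected[OF K y z]
proof (induction rule: rtranclp_induct)
  case (step u w)
  obtain e where e: "e \<in> aug_edges H" "u \<in> e" "w \<in> e"
    using step.hyps(2) by (auto simp: aug_adj_def)
  obtain p q where "e = {p, q}"
    using aug_edge_doubleton[OF H e(1)] .
  then have "u = w \<or> e = {u, w}"
    using e by auto
  then show ?case
    using alternatingD[OF f] e(1) step.IH by force
qed simp

text \<open>On a non-bipartite component the signs of a nonzero alternating labelling would yield a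
  bipartition.\<close>
lemma alternating_nonbipartite_zero:
  assumes H: "mixed_graph H" and f: "alternating H f" and K: "K \<in> comps H"
    and nb: "\<not> bipartite_comp H K" and y: "y \<in> K"
  shows "f y = 0"
proof (rule ccontr)
  assume fy: "f y \<noteq> 0"
  note pm = alternating_comp_eq_or_neg[OF H f K y]
  define L where "L = {z\<in>K. f z = f y}"
  define R where "R = {z\<in>K. f z = - f y}"
  have "bipartition H K L R"
    unfolding bipartition_def
  proof (intro conjI ballI)
    show "L \<union> R = K" using pm by (auto simp: L_def R_def)
    show "L \<inter> R = {}" using fy by (auto simp: L_def R_def)
  next
    fix e assume "e \<in> comp_edges H K"
    then have e: "e \<in> aug_edges H" "e \<subseteq> K"
      by (auto simp: comp_edges_def)
    obtain p q where pq: "e = {p, q}"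
      using aug_edge_doubleton[OF H e(1)] .
    have "f p + f q = 0"
      using alternatingD[OF f] e(1) pq by simp
    moreover have "p \<in> K" "q \<in> K"
      using e pq by auto
    ultimately show "\<exists>a b. a \<in> L \<and> b \<in> R \<and> e = {a, b}"
      using pm[of p] pm[of q] fy pq unfolding L_def R_def
      by (smt (verit) insert_commute mem_Collect_eq)
  qed
  then show False
    using nb by (auto simp: bipartite_comp_def)
qed

definition bip_comps :: "'v edge set \<Rightarrow> 'v avert set set" where
  "bip_comps H = {K \<in> comps H. bipartite_comp H K}"

definition comp_bip_vec :: "('v::finite) edge set \<Rightarrow> 'v avert set \<Rightarrow> real ^ 'v" where
  "comp_bip_vec H K = (let LR = SOME LR. bipartition H K (fst LR) (snd LR) in bip_vec (fst LR) (snd LR))"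

lemma comp_bip_vec_bipartition:
  assumes "bipartite_comp H K"
  obtains L R where "bipartition H K L R" "comp_bip_vec H K = bip_vec L R"
proof -
  have "\<exists>LR. bipartition H K (fst LR) (snd LR)"
    using assms by (auto simp: bipartite_comp_def)
  from someI_ex[OF this] show ?thesis
    using that by (auto simp: comp_bip_vec_def Let_def)
qed

lemma comp_bip_vec_nonzero_iff:
  assumes "K \<in> bip_comps H"
  shows "comp_bip_vec H K $ i \<noteq> 0 \<longleftrightarrow> Inl i \<in> K"
proof -
  obtain L R where "bipartition H K L R" "comp_bip_vec H K = bip_vec L R"
    using comp_bip_vec_bipartition[of H K] assms unfolding bip_comps_def by blast
  then show ?thesis
    using bipartition_Un by (auto simp: bip_vec_nonzero_iff)
qed

definition comp_restrict :: "'v avert set \<Rightarrow> real ^ ('v::finite) \<Rightarrow> real ^ 'v" where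
  "comp_restrict K a = (\<chi> i. if Inl i \<in> K then a$i else 0)"

lemma sum_comp_restrict:
  fixes H :: "('v::finite) edge set"
  shows "(\<Sum>K\<in>comps H. comp_restrict K a) = a"
proof (subst vec_eq_iff, intro allI)
  fix i
  have "(\<Sum>K\<in>comps H. comp_restrict K a) $ i =
      (\<Sum>K\<in>comps H. if K = aug_comp H (Inl i) then a$i else 0)"
    unfolding sum_component comp_restrict_def
    using aug_comp_Inl[where H = H and i = i] comps_disjoint[where H = H and B = "aug_comp H (Inl i)"]
    by (intro sum.cong) auto
  also have "\<dots> = a$i"
    using aug_comp_Inl[where H = H and i = i] finite_comps[of H] by simp
  finally show "(\<Sum>K\<in>comps H. comp_restrict K a) $ i = a $ i" .
qed

lemma comp_restrict_ann_in_span: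
  fixes H :: "('v::finite) edge set"
  assumes H: "mixed_graph H" and a: "a \<in> ann H" and K: "K \<in> comps H"
  shows "comp_restrict K a \<in> span (comp_bip_vec H ` bip_comps H)"
proof (cases "bipartite_comp H K")
  case True
  obtain L R where bp: "bipartition H K L R" and v: "comp_bip_vec H K = bip_vec L R"
    using comp_bip_vec_bipartition[OF True] .
  obtain c where "\<And>i. Inl i \<in> K \<Longrightarrow> a$i = c * bip_vec L R $ i"
    using ann_on_bipartite_comp[OF H a K bp] by blast
  then have "comp_restrict K a = c *\<^sub>R comp_bip_vec H K"
    using bp v by (auto simp: vec_eq_iff comp_restrict_def bip_vec_nth side_sign_def bipartition_def)
  moreover have "comp_bip_vec H K \<in> comp_bip_vec H ` bip_comps H"
    using K True by (auto simp: bip_comps_def)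
  ultimately show ?thesis
    by (simp add: span_base span_mul)
next
  case False
  have "a$i = 0" if "Inl i \<in> K" for i
    using alternating_nonbipartite_zero[OF H ann_imp_alternating[OF H a] K False that]
    by (simp add: aug_labelling_def)
  then have "comp_restrict K a = 0"
    by (auto simp: vec_eq_iff comp_restrict_def)
  then show ?thesis
    by (simp add: span_zero)
qed

lemma ann_eq_span_comp_bip_vec:
  fixes H :: "('v::finite) edge set"
  assumes H: "mixed_graph H"
  shows "ann H = span (comp_bip_vec H ` bip_comps H)"
proof
  show "span (comp_bip_vec H ` bip_comps H) \<subseteq> ann H"
  proof (rule span_minimal[OF _ subspace_ann], safe)
    fix K assume "K \<in> bip_comps H"
    then have K: "K \<in> comps H" "bipartite_comp H K"
      by (auto simp: bip_comps_def)
    obtain L R where "bipartition H K L R" "comp_bip_vec H K = bip_vec L R"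
      using comp_bip_vec_bipartition[OF K(2)] .
    then show "comp_bip_vec H K \<in> ann H"
      using bip_vec_ann[OF H K(1)] by simp
  qed
  show "ann H \<subseteq> span (comp_bip_vec H ` bip_comps H)"
  proof
    fix a assume "a \<in> ann H"
    then have "(\<Sum>K\<in>comps H. comp_restrict K a) \<in> span (comp_bip_vec H ` bip_comps H)"
      using comp_restrict_ann_in_span[OF H] by (simp add: span_sum)
    then show "a \<in> span (comp_bip_vec H ` bip_comps H)"
      by (simp add: sum_comp_restrict)
  qed
qed

lemma dim_ann:
  fixes H :: "('v::finite) edge set"
  assumes H: "mixed_graph H"
  shows "dim (ann H) = bicomp H"
proof -
  \<comment> \<open>The vectors have pairwise disjoint nonempty supports.\<close>
  have supp: "comp_bip_vec H K $ i \<noteq> 0 \<longleftrightarrow> Inl i \<in> K" if "K \<in> bip_comps H" for K i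
    using comp_bip_vec_nonzero_iff[OF that] .
  have disj: "Inl i \<notin> K'" if "K \<in> bip_comps H" "K' \<in> bip_comps H" "K \<noteq> K'" "Inl i \<in> K" for K K' i
    using comps_disjoint[of K H K'] that by (auto simp: bip_comps_def)
  have ex: "\<exists>i. Inl i \<in> K" if "K \<in> bip_comps H" for K
    using that unfolding bip_comps_def by (blast elim: comps_ex_Inl)
  have inj: "inj_on (comp_bip_vec H) (bip_comps H)"
    by (rule inj_onI) (metis supp disj ex)
  have "independent (comp_bip_vec H ` bip_comps H)"
  proof (rule pairwise_orthogonal_independent)
    have "comp_bip_vec H K \<bullet> comp_bip_vec H K' = 0"
      if "K \<in> bip_comps H" "K' \<in> bip_comps H" "K \<noteq> K'" for K K'
      unfolding inner_vec_def inner_real_def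
      by (rule sum.neutral) (metis that supp disj mult_eq_0_iff)
    then show "pairwise orthogonal (comp_bip_vec H ` bip_comps H)"
      unfolding pairwise_def orthogonal_def by blast
    show "0 \<notin> comp_bip_vec H ` bip_comps H"
      using supp ex by fastforce
  qed
  then have "dim (ann H) = card (comp_bip_vec H ` bip_comps H)"
    using ann_eq_span_comp_bip_vec[OF H] dim_eq_card_independent by simp
  also have "\<dots> = bicomp H"
    using card_image[OF inj] by (simp add: bicomp_def bip_comps_def)
  finally show ?thesis .
qed

lemma dim_rho_image_add_bicomp:
  fixes H :: "('v::finite) edge set"
  assumes H: "mixed_graph H"
  shows "dim (rho ` H) + bicomp H = dim (UNIV :: (real ^ 'v) set)"
proof -
  have "{y \<in> UNIV. \<forall>x \<in> span (rho ` H). orthogonal x y} = ann H"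
  proof (intro set_eqI iffI)
    fix y assume "y \<in> {y \<in> UNIV. \<forall>x \<in> span (rho ` H). orthogonal x y}"
    then show "y \<in> ann H"
      by (auto simp: ann_def orthogonal_def inner_commute span_base)
  next
    fix y assume y: "y \<in> ann H"
    have "orthogonal y x" if "x \<in> span (rho ` H)" for x
      by (rule orthogonal_to_span[OF that]) (use y in \<open>auto simp: ann_def orthogonal_def\<close>)
    then show "y \<in> {y \<in> UNIV. \<forall>x \<in> span (rho ` H). orthogonal x y}"
      by (simp add: orthogonal_commute)
  qed
  then show ?thesis
    using dim_subspace_orthogonal_to_vectors[of "span (rho ` H)" UNIV] dim_ann[OF H] by simp
qed

section \<open>Facet subgraphs\<close>

lemma bip_vec_inner_rho_pos_iff:
  assumes LR: "L \<inter> R = {}" and wf: "wf_edge e"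
  shows "0 < bip_vec L R \<bullet> rho e \<longleftrightarrow> edge_ok (proj L) (proj R) e"
proof (cases e)
  case (Pos s)
  then obtain i j where "s = {i, j}"
    using wf by (auto simp: wf_edge_def)
  then show ?thesis using Pos LR
    by (cases "i = j") (auto simp: inner_rho edge_ok_def proj_def bip_vec_nth side_sign_def)
next
  case (Neg s)
  then obtain i j where "s = {i, j}"
    using wf by (auto simp: wf_edge_def)
  then show ?thesis using Neg LR
    by (cases "i = j") (auto simp: inner_rho edge_ok_def proj_def bip_vec_nth side_sign_def)
next
  case (Dir i j)
  then show ?thesis using LR
    by (auto simp: inner_rho edge_ok_def proj_def bip_vec_nth side_sign_def)
qed

lemma aug_edges_mono: "H \<subseteq> G \<Longrightarrow> aug_edges H \<subseteq> aug_edges G"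
  unfolding aug_edges_def by (intro Un_mono) auto

lemma aug_adj_mono: "H \<subseteq> G \<Longrightarrow> aug_adj H x y \<Longrightarrow> aug_adj G x y"
  using aug_edges_mono unfolding aug_adj_def by blast

lemma aug_vertices_mono: "H \<subseteq> G \<Longrightarrow> aug_vertices H \<subseteq> aug_vertices G"
  unfolding aug_vertices_def by auto

lemma aug_edges_touching_comp:
  assumes HG: "H \<subseteq> G" and K: "K \<in> comps H"
    and untouched: "\<forall>e\<in>G - H. \<forall>i\<in>edge_verts e. Inl i \<notin> K"
    and e: "e \<in> aug_edges G" and touch: "e \<inter> K \<noteq> {}"
  shows "e \<in> aug_edges H"
  using e
proof (cases rule: aug_edgesE)
  case (signed s)
  show ?thesis
  proof (cases "Pos s \<in> H \<or> Neg s \<in> H")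
    case True
    then show ?thesis using signed(1) aug_edgesI(1,2) by blast
  next
    case False
    then have "Pos s \<in> G - H \<or> Neg s \<in> G - H"
      using signed(2) by blast
    then have "\<forall>i\<in>s. Inl i \<notin> K"
      using untouched by force
    then show ?thesis
      using signed(1) touch by blast
  qed
next
  case (tail i j)
  then show ?thesis
    using untouched touch aug_edgesI(3)[of i j H] comps_subset_vertices[OF K]
    by (cases "Dir i j \<in> H") (auto dest: Dir_if_Inr_aug_vertices)
next
  case (head i j)
  then show ?thesis
    using untouched touch aug_edgesI(4)[of i j H] comps_subset_vertices[OF K]
    by (cases "Dir i j \<in> H") (auto dest: Dir_if_Inr_aug_vertices)
qed

lemma comps_supergraph_if_closed:
  assumes HG: "H \<subseteq> G" and K: "K \<in> comps H"
    and closed: "\<And>e. e \<in> aug_edges G \<Longrightarrow> e \<inter> K \<noteq> {} \<Longrightarrow> e \<in> aug_edges H"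
  shows "K \<in> comps G"
proof -
  obtain i where i: "Inl i \<in> K"
    using comps_ex_Inl[OF K] .
  have "K = aug_comp G (Inl i)"
  proof (intro equalityI subsetI)
    fix y assume "y \<in> K"
    then have "(aug_adj H)\<^sup>*\<^sup>* (Inl i) y"
      using comps_connected[OF K i] by blast
    then have "(aug_adj G)\<^sup>*\<^sup>* (Inl i) y"
      by (rule rtranclp_mono[THEN predicate2D, rotated]) (auto intro: aug_adj_mono[OF HG])
    then show "y \<in> aug_comp G (Inl i)"
      using \<open>y \<in> K\<close> comps_subset_vertices[OF K] aug_vertices_mono[OF HG]
      by (auto simp: aug_comp_def)
  next
    fix y assume "y \<in> aug_comp G (Inl i)"
    then have "(aug_adj G)\<^sup>*\<^sup>* (Inl i) y"
      by (simp add: aug_comp_def)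
    then show "y \<in> K"
    proof (induction rule: rtranclp_induct)
      case (step z y)
      obtain e where e: "e \<in> aug_edges G" "z \<in> e" "y \<in> e"
        using step.hyps(2) by (auto simp: aug_adj_def)
      then have "aug_adj H z y"
        using closed step.IH by (auto simp: aug_adj_def)
      then show ?case
        using comps_adj_closed[OF K step.IH] by blast
    qed (rule i)
  qed
  then show ?thesis
    using aug_comp_Inl(1) by metis
qed

lemma is_comp_of_if_untouched:
  assumes G: "mixed_graph G" and HG: "H \<subseteq> G" and K: "K \<in> comps H"
    and untouched: "\<forall>e\<in>G - H. \<forall>i\<in>edge_verts e. Inl i \<notin> K"
  shows "is_comp_of G H K"
proof -
  note closed = aug_edges_touching_comp[OF HG K untouched]
  have "e \<in> aug_edges H" if "e \<in> aug_edges G" "e \<subseteq> K" for e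
    using aug_edge_doubleton[OF G that(1)] closed[OF that(1)] that(2) by blast
  then have "comp_edges G K = comp_edges H K"
    using aug_edges_mono[OF HG] unfolding comp_edges_def by blast
  then show ?thesis
    using comps_supergraph_if_closed[OF HG K closed] by (simp add: is_comp_of_def)
qed

text \<open>If the \<open>\<pm>1\<close> labelling of a bipartite component \<open>K\<close> of \<open>H\<close> is orthogonal to all of \<open>rho ` G\<close>,
  then any edge of \<open>G - H\<close> meeting \<open>K\<close> lies entirely over \<open>K\<close>, where every element of the complement
  of \<open>rho ` H\<close> is a multiple of that labelling; so no such element separates \<open>H\<close> from \<open>G\<close>.\<close>
lemma is_comp_of_if_bip_vec_ann:
  assumes G: "mixed_graph G" and HG: "H \<subseteq> G" and K: "K \<in> comps H" and bp: "bipartition H K L R"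
    and bG: "bip_vec L R \<in> ann G" and w: "w \<in> ann H" and separates: "\<forall>e\<in>G - H. w \<bullet> rho e \<noteq> 0"
  shows "is_comp_of G H K"
proof (rule is_comp_of_if_untouched[OF G HG K], intro ballI notI)
  fix e i assume e: "e \<in> G - H" and i: "i \<in> edge_verts e" "Inl i \<in> K"
  let ?b = "bip_vec L R"
  have supp: "?b $ j \<noteq> 0 \<longleftrightarrow> Inl j \<in> K" for j
    using bipartition_Un[OF bp] by (auto simp: bip_vec_nonzero_iff)
  obtain c where c: "\<And>j. Inl j \<in> K \<Longrightarrow> w$j = c * ?b$j"
    using ann_on_bipartite_comp[OF mixed_graph_subset[OF G HG] w K bp] by blast
  have wf: "wf_edge e" and b0: "?b \<bullet> rho e = 0"
    using e G bG by (auto simp: mixed_graph_def ann_def)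
  have "\<forall>j\<in>edge_verts e. w$j = c * ?b$j"
    using inner_rho_zero_support[OF wf b0 i(1)] supp i(2) c by blast
  then have "w \<bullet> rho e = c * (?b \<bullet> rho e)"
    by (rule inner_rho_eq_scaled[OF wf])
  then have "w \<bullet> rho e = 0"
    using b0 by simp
  then show False
    using separates e by blast
qed

lemma bicomp_le_if_comps:
  fixes G H :: "('v::finite) edge set"
  assumes "\<forall>K\<in>comps H. bipartite_comp H K \<longrightarrow> is_comp_of G H K"
  shows "bicomp H \<le> bicomp G"
  unfolding bicomp_def
proof (rule card_mono)
  show "finite {K \<in> comps G. bipartite_comp G K}"
    by (simp add: finite_comps)
  show "{K \<in> comps H. bipartite_comp H K} \<subseteq> {K \<in> comps G. bipartite_comp G K}"
  proof safe
    fix K assume K: "K \<in> comps H" "bipartite_comp H K"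
    then have "K \<in> comps G" "comp_edges G K = comp_edges H K"
      using assms by (auto simp: is_comp_of_def)
    then show "K \<in> comps G" "bipartite_comp G K"
      using K(2) by (simp_all add: bipartite_comp_def bipartition_def)
  qed
qed

text \<open>The complement of \<open>rho ` H\<close> is spanned by that of \<open>rho ` G\<close> and the supporting normal \<open>a\<close>.\<close>
lemma ann_supporting_decompose:
  assumes G: "mixed_graph G" and H: "H = {e\<in>G. a \<bullet> rho e = 0}"
    and bic: "bicomp H = bicomp G + 1" and b: "b \<in> ann H"
  obtains k where "\<And>e. e \<in> G \<Longrightarrow> b \<bullet> rho e = k * (a \<bullet> rho e)"
proof -
  have HG: "H \<subseteq> G" using H by blast
  have aH: "a \<in> ann H" using H by (auto simp: ann_def)
  have "a \<notin> ann G"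
  proof
    assume "a \<in> ann G"
    then have "H = G" using H by (auto simp: ann_def)
    then show False using bic by simp
  qed
  then have "a \<notin> span (ann G)"
    using subspace_ann span_eq_iff by metis
  then have "dim (span (insert a (ann G))) = dim (ann G) + 1"
    by (simp add: dim_insert)
  then have "span (insert a (ann G)) = ann H"
    using aH ann_antimono[OF HG] subspace_ann bic
      dim_ann[OF G] dim_ann[OF mixed_graph_subset[OF G HG]]
    by (intro subspace_dim_equal span_minimal) auto
  then obtain k where "b - k *\<^sub>R a \<in> ann G"
    using b span_breakdown_eq subspace_ann[of G] by (metis span_eq_iff)
  then show ?thesis
    using that by (auto simp: ann_def inner_diff_left)
qed

lemma bipartition_oriented_if_scaled:
  assumes bp: "bipartition H K L R" and wf: "\<And>e. e \<in> G \<Longrightarrow> wf_edge e"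
    and k: "\<And>e. e \<in> G \<Longrightarrow> bip_vec L R \<bullet> rho e = k * (a \<bullet> rho e)" and "k \<noteq> 0"
    and pos: "\<And>e. e \<in> G - H \<Longrightarrow> 0 < a \<bullet> rho e"
  shows "\<exists>L R. bipartition H K L R \<and> (\<forall>x\<in>G - H. edge_ok (proj L) (proj R) x)"
proof -
  note LR = bipartition_disjoint[OF bp]
  show ?thesis
  proof (cases "0 < k")
    case True
    have "edge_ok (proj L) (proj R) x" if "x \<in> G - H" for x
    proof -
      have "0 < bip_vec L R \<bullet> rho x"
        using k pos that True by simp
      then show ?thesis
        using bip_vec_inner_rho_pos_iff[OF LR wf] that by blast
    qed
    then show ?thesis using bp by blast
  next
    case False
    have "edge_ok (proj R) (proj L) x" if "x \<in> G - H" for x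
    proof -
      have "0 < bip_vec R L \<bullet> rho x"
        using k pos that False \<open>k \<noteq> 0\<close> bip_vec_swap[OF LR] by (simp add: mult_neg_pos)
      then show ?thesis
        using bip_vec_inner_rho_pos_iff[of R L, OF _ wf] LR that by blast
    qed
    then show ?thesis using bipartition_swap[OF bp] by blast
  qed
qed

definition facet_normal :: "('v::finite) edge set \<Rightarrow> real ^ 'v \<Rightarrow> bool" where
  "facet_normal G a \<longleftrightarrow> (\<forall>e\<in>G. 0 \<le> a \<bullet> rho e) \<and> bicomp {e\<in>G. a \<bullet> rho e = 0} = bicomp G + 1"

lemma facet_of_nonneg_cone_iff:
  fixes G :: "('v::finite) edge set"
  assumes G: "mixed_graph G"
  shows "F facet_of nonneg_cone (edge_polytope G) \<longleftrightarrow>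
    (\<exists>a. facet_normal G a \<and> F = nonneg_cone (edge_polytope {e\<in>G. a \<bullet> rho e = 0}))"
proof -
  have rho_zero: "{v \<in> rho ` G. a \<bullet> v = 0} = rho ` {e\<in>G. a \<bullet> rho e = 0}" for a
    by auto
  have dim_iff: "dim (rho ` H) + 1 = dim (rho ` G) \<longleftrightarrow> bicomp H = bicomp G + 1" if "H \<subseteq> G" for H
    using dim_rho_image_add_bicomp[OF G] dim_rho_image_add_bicomp[OF mixed_graph_subset[OF G that]]
    by linarith
  show ?thesis
    unfolding nonneg_cone_edge_polytope facet_normal_def rho_zero
      facet_of_convex_cone_hull_finite_iff[OF finite_imageI[OF finite_edge_set]]
      dim_iff[OF Collect_restrict]
    by simp
qed

lemma facet_subgraph_if_facet_normal:
  assumes G: "mixed_graph G" and normal: "facet_normal G a"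
  shows "facet_subgraph G {e\<in>G. a \<bullet> rho e = 0}" (is "facet_subgraph G ?H")
  unfolding facet_subgraph_def
proof (intro conjI ballI impI)
  show HG: "?H \<subseteq> G" by blast
  show bic: "bicomp ?H = bicomp G + 1"
    using normal by (simp add: facet_normal_def)
  have pos: "0 < a \<bullet> rho e" if "e \<in> G - ?H" for e
    using that normal by (force simp: facet_normal_def)
  fix K assume K: "K \<in> comps ?H" "bipartite_comp ?H K \<and> \<not> is_comp_of G ?H K"
  then obtain L R where bp: "bipartition ?H K L R"
    by (auto simp: bipartite_comp_def)
  obtain k where k: "\<And>e. e \<in> G \<Longrightarrow> bip_vec L R \<bullet> rho e = k * (a \<bullet> rho e)"
    using ann_supporting_decompose[OF G refl bic bip_vec_ann[OF mixed_graph_subset[OF G HG] K(1) bp]]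
    by blast
  have "k \<noteq> 0"
  proof
    assume "k = 0"
    then have "bip_vec L R \<in> ann G"
      using k by (simp add: ann_def)
    moreover have "a \<in> ann ?H"
      by (auto simp: ann_def)
    ultimately have "is_comp_of G ?H K"
      using is_comp_of_if_bip_vec_ann[OF G HG K(1) bp] pos by force
    then show False using K by blast
  qed
  then show "\<exists>L R. bipartition ?H K L R \<and> (\<forall>x\<in>G - ?H. edge_ok (proj L) (proj R) x)"
    using bipartition_oriented_if_scaled[OF bp mixed_graph_wf_edge[OF G] k _ pos] by blast
qed

lemma facet_normal_if_facet_subgraph:
  assumes G: "mixed_graph G" and fs: "facet_subgraph G H"
  obtains a where "facet_normal G a" "H = {e\<in>G. a \<bullet> rho e = 0}"
proof -
  have HG: "H \<subseteq> G" and bic: "bicomp H = bicomp G + 1"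
    using fs by (auto simp: facet_subgraph_def)
  obtain K where K: "K \<in> comps H" "bipartite_comp H K" "\<not> is_comp_of G H K"
    using bicomp_le_if_comps[of H G] bic by force
  then obtain L R where bp: "bipartition H K L R" and ok: "\<forall>x\<in>G - H. edge_ok (proj L) (proj R) x"
    using fs by (auto simp: facet_subgraph_def)
  have zero: "bip_vec L R \<bullet> rho e = 0" if "e \<in> H" for e
    using bip_vec_ann[OF mixed_graph_subset[OF G HG] K(1) bp] that by (auto simp: ann_def)
  have pos: "0 < bip_vec L R \<bullet> rho e" if "e \<in> G - H" for e
    using bip_vec_inner_rho_pos_iff[OF bipartition_disjoint[OF bp] mixed_graph_wf_edge[OF G]] ok that
    by blast
  have "H = {e\<in>G. bip_vec L R \<bullet> rho e = 0}"
    using zero pos HG by fastforce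
  moreover have "\<forall>e\<in>G. 0 \<le> bip_vec L R \<bullet> rho e"
    using zero pos by (metis Diff_iff order.refl less_imp_le)
  ultimately have "facet_normal G (bip_vec L R)"
    using bic by (simp add: facet_normal_def)
  then show ?thesis
    using that \<open>H = _\<close> by blast
qed

lemma facet_subgraph_iff_facet_normal:
  assumes "mixed_graph G"
  shows "facet_subgraph G H \<longleftrightarrow> (\<exists>a. facet_normal G a \<and> H = {e\<in>G. a \<bullet> rho e = 0})"
  using facet_subgraph_if_facet_normal[OF assms] facet_normal_if_facet_subgraph[OF assms] by blast

theorem mainTheorem10:
  fixes G :: "('v::finite) edge set" and F :: "(real ^ 'v) set"
  assumes "mixed_graph G"
  shows "F facet_of nonneg_cone (edge_polytope G) \<longleftrightarrow>
         (\<exists>H. facet_subgraph G H \<and> nonneg_cone (edge_polytope H) = F)"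
  unfolding facet_of_nonneg_cone_iff[OF assms] facet_subgraph_iff_facet_normal[OF assms] by blast

end
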